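(* Let $N=(A,B,C,\eta,\chi,\psi)$ be an extended $\eta$-diagram. Then $\Delta(N)\cong(A',B',C',\eta',\chi',\psi')$ where $B'=\mathrm{Hom}(B,\mathbb{Z}/4)$; $A'$ is the set of pairs $(g,h)$ with $g\colon B\to\mathbb{Z}/2$, $h\colon C\to\mathbb{Z}$ such that $g\circ\chi$ equals $h$ followed by reduction $\mathbb{Z}\to\mathbb{Z}/2$; $C'$ is the set of pairs $(f,g)$ with $f\colon A\to\mathbb{Z}$, $g\colon B\to\mathbb{Z}/2$ such that $g\circ\chi\circ\eta$ equals $f$ followed by reduction $\mathbb{Z}\to\mathbb{Z}/2$; and, with $t\colon\mathbb{Z}/2\to\mathbb{Z}/4$ and $s\colon\mathbb{Z}/4\to\mathbb{Z}/2$ the unique nonzero homomorphisms, the structure maps $\psi'\colon B'\to A'$, $\eta'\colon A'\to C'$, $\chi'\colon C'\to B'$ are $\psi'(g)=(sg,0)$, $\eta'(g,h)=(0,g)$, $\chi'(f,g)=tg$.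
   Context: An extended $\eta$-diagram $N=(A,B,C,\eta,\chi,\psi)$ is a diagram of abelian groups $B\xrightarrow{\psi}A\xrightarrow{\eta}C\xrightarrow{\chi}B$ with $2\eta=0$, $\psi\chi=0$, $\chi\eta\psi=2\cdot1_B$. Let $\mathcal{J}$ be the additive category with objects $a,b,c$, generated by morphisms $\rho\colon a\to b$, $\eta\colon c\to a$, $\beta\colon b\to c$ subject to $2\rho=2\eta=2\beta=0$, $\beta\rho=0$, $\rho\eta\beta=2\cdot1_b$; explicitly $\mathcal{J}(a,a)=\mathbb{Z}$, $\mathcal{J}(a,b)=(\mathbb{Z}/2)\rho$, $\mathcal{J}(a,c)=0$, $\mathcal{J}(b,a)=(\mathbb{Z}/2)\eta\beta$, $\mathcal{J}(b,b)=\mathbb{Z}/4$, $\mathcal{J}(b,c)=(\mathbb{Z}/2)\beta$, $\mathcal{J}(c,a)=(\mathbb{Z}/2)\eta$, $\mathcal{J}(c,b)=(\mathbb{Z}/2)\rho\eta$, $\mathcal{J}(c,c)=\mathbb{Z}$. Extended $\eta$-diagrams are identified with additive functors $\mathcal{J}^{op}\to\mathrm{Ab}$ via $N(a)=A$, $N(b)=B$, $N(c)=C$, $N(\rho)=\psi$, $N(\eta)=\eta$, $N(\beta)=\chi$; morphisms are natural transformations; this category is $\mathrm{EED}$. $F_x=\mathcal{J}(-,x)$. $\Delta\colon\mathcal{J}^{op}\to\mathcal{J}$ is the functor with $\Delta(a)=c$, $\Delta(b)=b$, $\Delta(c)=a$, $\Delta(\rho)=\beta$, $\Delta(\eta)=\eta$,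 $\Delta(\beta)=\rho$. For $N\in\mathrm{EED}$, $\Delta(N)(x)=\mathrm{EED}(N,F_{\Delta(x)})$, functorial in $x$ via composition with $F_{\Delta(u)}$; its $A$-, $B$-, $C$-groups are $\Delta(N)(a),\Delta(N)(b),\Delta(N)(c)$. *)

theory Defs
  imports Main "HOL-Library.Numeral_Type"
begin

definition hom_add :: "('a::ab_group_add \<Rightarrow> 'b::ab_group_add) \<Rightarrow> bool" where
  "hom_add f \<longleftrightarrow> (\<forall>x y. f (x + y) = f x + f y)"

datatype obj = Oa | Ob | Oc

text \<open>J(x,y) is a cyclic group; its elements are represented by integers
  (multiples of the canonical generator: identity, rho, eta beta, beta, eta,
  rho eta), normalised modulo the order of the group (order 0 = infinite
  cyclic, order 1 = trivial group).\<close>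

fun Jord :: "obj \<Rightarrow> obj \<Rightarrow> int" where
  "Jord Oa Oa = 0"
| "Jord Oc Oc = 0"
| "Jord Oa Oc = 1"
| "Jord Ob Ob = 4"
| "Jord _ _ = 2"

definition Jnorm :: "obj \<Rightarrow> obj \<Rightarrow> int \<Rightarrow> int" where
  "Jnorm x y n = (if Jord x y = 0 then n else n mod Jord x y)"

definition Jhom :: "obj \<Rightarrow> obj \<Rightarrow> int set" where
  "Jhom x y = {n. Jnorm x y n = n}"

definition Jadd :: "obj \<Rightarrow> obj \<Rightarrow> int \<Rightarrow> int \<Rightarrow> int" where
  "Jadd x y m n = Jnorm x y (m + n)"

text \<open>Composition coefficient: gen(y,z) o gen(x,y) = Jk x y z * gen(x,z).\<close>
fun Jk :: "obj \<Rightarrow> obj \<Rightarrow> obj \<Rightarrow> int" where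
  "Jk Ob Oa Ob = 2"   \<comment> \<open>rho o (eta beta) = rho eta beta = 2\<close>
| "Jk Ob Oc Ob = 2"   \<comment> \<open>(rho eta) o beta = 2\<close>
| "Jk Ob Oc Oa = 1"   \<comment> \<open>eta o beta\<close>
| "Jk Oc Oa Ob = 1"   \<comment> \<open>rho o eta\<close>
| "Jk x y z = (if x = y \<or> y = z then 1 else 0)"

text \<open>Jcomp x y z g f = g o f for f : x -> y and g : y -> z.\<close>
definition Jcomp :: "obj \<Rightarrow> obj \<Rightarrow> obj \<Rightarrow> int \<Rightarrow> int \<Rightarrow> int" where
  "Jcomp x y z g f = Jnorm x z (g * f * Jk x y z)"

fun Delta_obj :: "obj \<Rightarrow> obj" where
  "Delta_obj Oa = Oc"
| "Delta_obj Ob = Ob"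
| "Delta_obj Oc = Oa"

definition ext_eta_diagram ::
  "('a::ab_group_add \<Rightarrow> 'c::ab_group_add) \<Rightarrow> ('c \<Rightarrow> 'b::ab_group_add) \<Rightarrow> ('b \<Rightarrow> 'a) \<Rightarrow> bool" where
  "ext_eta_diagram eta chi psi \<longleftrightarrow>
     hom_add eta \<and> hom_add chi \<and> hom_add psi \<and>
     (\<forall>x. eta x + eta x = 0) \<and>
     (\<forall>y. psi (chi y) = 0) \<and>
     (\<forall>y. chi (eta (psi y)) = y + y)"

text \<open>EED(N, F_y): natural transformations from N to the representable F_y = J(-,y).
  F_y(u) is precomposition with u.  A transformation is a triple of components
  (tau_a : A -> J(a,y), tau_b : B -> J(b,y), tau_c : C -> J(c,y)); additivity of the
  components and naturality with respect to the generating morphisms rho, eta, beta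
  (equivalent to naturality w.r.t. all morphisms, both functors being additive).\<close>
definition nat_to_rep ::
  "('a::ab_group_add \<Rightarrow> 'c::ab_group_add) \<Rightarrow> ('c \<Rightarrow> 'b::ab_group_add) \<Rightarrow> ('b \<Rightarrow> 'a) \<Rightarrow> obj
   \<Rightarrow> (('a \<Rightarrow> int) \<times> ('b \<Rightarrow> int) \<times> ('c \<Rightarrow> int)) set" where
  "nat_to_rep eta chi psi y = {(ta, tb, tc).
     (\<forall>m. ta m \<in> Jhom Oa y) \<and> (\<forall>m. tb m \<in> Jhom Ob y) \<and> (\<forall>m. tc m \<in> Jhom Oc y) \<and>
     (\<forall>m n. ta (m + n) = Jadd Oa y (ta m) (ta n)) \<and>
     (\<forall>m n. tb (m + n) = Jadd Ob y (tb m) (tb n)) \<and>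
     (\<forall>m n. tc (m + n) = Jadd Oc y (tc m) (tc n)) \<and>
     (\<forall>m. ta (psi m) = Jcomp Oa Ob y (tb m) 1) \<and>   \<comment> \<open>naturality for rho : a -> b\<close>
     (\<forall>m. tc (eta m) = Jcomp Oc Oa y (ta m) 1) \<and>   \<comment> \<open>naturality for eta : c -> a\<close>
     (\<forall>m. tb (chi m) = Jcomp Ob Oc y (tc m) 1)}"    \<comment> \<open>naturality for beta : b -> c\<close>

definition nat_add :: "obj \<Rightarrow> (('a \<Rightarrow> int) \<times> ('b \<Rightarrow> int) \<times> ('c \<Rightarrow> int))
     \<Rightarrow> (('a \<Rightarrow> int) \<times> ('b \<Rightarrow> int) \<times> ('c \<Rightarrow> int)) \<Rightarrow> (('a \<Rightarrow> int) \<times> ('b \<Rightarrow> int) \<times> ('c \<Rightarrow> int))" where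
  "nat_add y \<tau> \<sigma> = (case \<tau> of (ta, tb, tc) \<Rightarrow> case \<sigma> of (sa, sb, sc) \<Rightarrow>
      (\<lambda>m. Jadd Oa y (ta m) (sa m), \<lambda>m. Jadd Ob y (tb m) (sb m), \<lambda>m. Jadd Oc y (tc m) (sc m)))"

text \<open>Composition with F_g : F_y -> F_y' for the generator g : y -> y' (postcomposition).\<close>
definition nat_post :: "obj \<Rightarrow> obj \<Rightarrow> (('a \<Rightarrow> int) \<times> ('b \<Rightarrow> int) \<times> ('c \<Rightarrow> int))
     \<Rightarrow> (('a \<Rightarrow> int) \<times> ('b \<Rightarrow> int) \<times> ('c \<Rightarrow> int))" where
  "nat_post y y' \<tau> = (case \<tau> of (ta, tb, tc) \<Rightarrow>
      (\<lambda>m. Jcomp Oa y y' 1 (ta m), \<lambda>m. Jcomp Ob y y' 1 (tb m), \<lambda>m. Jcomp Oc y y' 1 (tc m)))"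

definition DeltaN where
  "DeltaN eta chi psi x = nat_to_rep eta chi psi (Delta_obj x)"

text \<open>Structure maps of Delta(N): Delta(N)(u) = composition with F_Delta(u), for
  Delta(rho) = beta : b -> c, Delta(eta) = eta : c -> a, Delta(beta) = rho : a -> b.\<close>
definition Delta_psi where "Delta_psi = nat_post Ob Oc"
definition Delta_eta where "Delta_eta = nat_post Oc Oa"
definition Delta_chi where "Delta_chi = nat_post Oa Ob"

definition t_map :: "2 \<Rightarrow> 4" where
  "t_map = (THE t. hom_add t \<and> t \<noteq> (\<lambda>_. 0))"
definition s_map :: "4 \<Rightarrow> 2" where
  "s_map = (THE s. hom_add s \<and> s \<noteq> (\<lambda>_. 0))"

definition A' :: "('c::ab_group_add \<Rightarrow> 'b::ab_group_add) \<Rightarrow> (('b \<Rightarrow> 2) \<times> ('c \<Rightarrow> int)) set" where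
  "A' chi = {(g, h). hom_add g \<and> hom_add h \<and> (\<forall>m. g (chi m) = of_int (h m))}"

definition B' :: "('b::ab_group_add \<Rightarrow> 4) set" where
  "B' = {g. hom_add g}"

definition C' :: "('a::ab_group_add \<Rightarrow> 'c::ab_group_add) \<Rightarrow> ('c \<Rightarrow> 'b::ab_group_add)
     \<Rightarrow> (('a \<Rightarrow> int) \<times> ('b \<Rightarrow> 2)) set" where
  "C' eta chi = {(f, g). hom_add f \<and> hom_add g \<and> (\<forall>m. g (chi (eta m)) = of_int (f m))}"

definition psi' :: "('b \<Rightarrow> 4) \<Rightarrow> ('b \<Rightarrow> 2) \<times> ('c \<Rightarrow> int)" where
  "psi' g = (s_map \<circ> g, \<lambda>_. 0)"
definition eta' :: "('b \<Rightarrow> 2) \<times> ('c \<Rightarrow> int) \<Rightarrow> ('a \<Rightarrow> int) \<times> ('b \<Rightarrow> 2)" where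
  "eta' p = (case p of (g, h) \<Rightarrow> (\<lambda>_. 0, g))"
definition chi' :: "('a \<Rightarrow> int) \<times> ('b \<Rightarrow> 2) \<Rightarrow> ('b \<Rightarrow> 4)" where
  "chi' p = (case p of (f, g) \<Rightarrow> t_map \<circ> g)"

end

theory Submission
  imports Defs
begin

text \<open>For \<open>y = c\<close> the component at \<open>a\<close> vanishes, and the square for \<open>\<eta>\<close> is automatic
  because \<open>2\<eta> = 0\<close> and \<open>\<int>\<close> is torsion free; what remains is the pair \<open>(g, h)\<close> of \<open>A'\<close>.
  For \<open>y = a\<close> the component at \<open>c\<close> equals \<open>g \<circ> \<chi>\<close>, and the square for \<open>\<rho>\<close> is automatic
  because \<open>2\<psi> = \<psi>\<chi>\<eta>\<psi> = 0\<close>; what remains is \<open>C'\<close>.  For \<open>y = b\<close> everything is determined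
  by the component \<open>g : B \<rightarrow> \<int>/4\<close>: since \<open>2\<chi> = \<chi>\<eta>\<psi>\<chi> = 0\<close>, the map \<open>g \<circ> \<chi>\<close> takes
  values in \<open>2\<int>/4\<close> and is twice the component at \<open>c\<close>, whose composite with \<open>\<eta>\<close> is the
  component at \<open>a\<close>; the square for \<open>\<rho>\<close> then follows from \<open>\<chi>\<eta>\<psi> = 2\<close>.\<close>

lemma Rep_bit0_of_int: "Rep_bit0 (of_int z :: 'a::finite bit0) = z mod int CARD('a bit0)"
  by (simp only: bit0.of_int_eq bit0.Rep_Abs_mod)

lemma of_int_Rep_bit0 [simp]: "of_int (Rep_bit0 x) = x"
  by (simp only: bit0.of_int_eq bit0.Rep_mod bit0.Rep_inverse)

lemma of_int_mod_card_bit0: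
  "(of_int (z mod int CARD('a bit0)) :: 'a::finite bit0) = of_int z"
  by (simp only: bit0.of_int_eq mod_mod_trivial)

lemma of_int_eq_of_int_bit0_iff:
  "(of_int a :: 'a::finite bit0) = of_int b \<longleftrightarrow> a mod int CARD('a bit0) = b mod int CARD('a bit0)"
  by (metis Rep_bit0_of_int bit0.of_int_eq)

lemma Rep_bit0_add: "Rep_bit0 (x + y :: 'a::finite bit0) = (Rep_bit0 x + Rep_bit0 y) mod int CARD('a bit0)"
  by (metis Rep_bit0_of_int of_int_Rep_bit0 of_int_add)

lemma Rep_bit0_bounds: "0 \<le> Rep_bit0 (x :: 'a::finite bit0) \<and> Rep_bit0 x < int CARD('a bit0)"
  by (metis bit0.Rep_mod bit0.Rep_less_n pos_mod_sign bit0.size0)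

lemmas Rep_2_of_int [simp] = Rep_bit0_of_int [where 'a=num1, simplified]
lemmas Rep_4_of_int [simp] = Rep_bit0_of_int [where 'a="num1 bit0", simplified]
lemmas of_int_eq_of_int_4_iff = of_int_eq_of_int_bit0_iff [where 'a="num1 bit0", simplified]
lemmas Rep_2_add = Rep_bit0_add [where 'a=num1, simplified]
lemmas Rep_4_add = Rep_bit0_add [where 'a="num1 bit0", simplified]
lemmas Rep_2_bounds = Rep_bit0_bounds [where 'a=num1, simplified]
lemmas Rep_4_bounds = Rep_bit0_bounds [where 'a="num1 bit0", simplified]

lemmas of_int_mod_2 [simp] = of_int_mod_card_bit0 [where 'a=num1, simplified]
lemmas of_int_mod_4 [simp] = of_int_mod_card_bit0 [where 'a="num1 bit0", simplified]

lemma of_int_mod_4_in_2 [simp]: "(of_int (z mod 4) :: 2) = of_int z"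
  using of_int_eq_of_int_bit0_iff [where 'a=num1] by (simp add: mod_mod_cancel)

lemma of_int_double_mod_2: "(of_int (2 * (z mod 2)) :: 4) = of_int (2 * z)"
  unfolding of_int_eq_of_int_4_iff by presburger

lemma Rep_2_cases: "Rep_bit0 (x :: 2) = 0 \<or> Rep_bit0 x = 1"
  using Rep_2_bounds[of x] by linarith

lemma Rep_two_torsion_4_cases:
  assumes "(x :: 4) + x = 0" shows "Rep_bit0 x = 0 \<or> Rep_bit0 x = 2"
proof -
  have "(Rep_bit0 x + Rep_bit0 x) mod 4 = 0"
    using Rep_4_add[of x x] by (simp add: assms bit0.Rep_0)
  then show ?thesis using Rep_4_bounds[of x] by presburger
qed

lemma nonzero_2_eq_one: "(x :: 2) \<noteq> 0 \<Longrightarrow> x = 1"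
  using Rep_2_cases[of x] by (simp add: bit0.Rep_inject_sym bit0.Rep_0 bit0.Rep_1)

lemma two_torsion_4_nonzero_eq_two: "(x :: 4) + x = 0 \<Longrightarrow> x \<noteq> 0 \<Longrightarrow> x = 2"
  using Rep_two_torsion_4_cases[of x] by (simp add: bit0.Rep_inject_sym bit0.Rep_0 bit0.Rep_numeral)

lemma hom_add_zero: "hom_add f \<Longrightarrow> f 0 = 0"
  unfolding hom_add_def by (metis add_cancel_right_right)

lemma hom_addD: "hom_add f \<Longrightarrow> f (x + y) = f x + f y"
  unfolding hom_add_def by blast

lemma hom_add_comp: "hom_add f \<Longrightarrow> hom_add g \<Longrightarrow> hom_add (\<lambda>x. f (g x))"
  by (simp add: hom_add_def)

lemma hom_add_int_two_torsion:
  "hom_add (f :: 'a::ab_group_add \<Rightarrow> int) \<Longrightarrow> x + x = 0 \<Longrightarrow> f x = 0"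
  using hom_addD[of f x x] hom_add_zero[of f] by simp

lemma hom_add_of_nat:
  "hom_add (f :: 'a::ring_1 \<Rightarrow> 'b::ring_1) \<Longrightarrow> f (of_nat n) = of_nat n * f 1"
  by (induction n) (auto simp: hom_add_zero hom_addD distrib_right add.commute)

lemma hom_add_bit0_eq:
  assumes "hom_add (f :: 'a::finite bit0 \<Rightarrow> 'b::ring_1)"
  shows "f x = of_int (Rep_bit0 x) * f 1"
proof -
  have "x = of_nat (nat (Rep_bit0 x))"
    using Rep_bit0_bounds[of x] by simp
  then show ?thesis
    using hom_add_of_nat[OF assms] Rep_bit0_bounds[of x] by (metis of_int_of_nat_eq nat_0_le)
qed

lemma hom_add_bit0_ext:
  fixes f g :: "'a::finite bit0 \<Rightarrow> 'b::ring_1"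
  assumes "hom_add f" "hom_add g" "f 1 = g 1"
  shows "f = g"
proof
  fix x
  show "f x = g x"
    by (simp only: hom_add_bit0_eq[OF assms(1), of x] hom_add_bit0_eq[OF assms(2), of x] assms(3))
qed

lemma hom_add_bit0_nonzero:
  fixes f :: "'a::finite bit0 \<Rightarrow> 'b::ring_1"
  assumes "hom_add f"
  shows "f \<noteq> (\<lambda>_. 0) \<longleftrightarrow> f 1 \<noteq> 0"
proof
  assume "f \<noteq> (\<lambda>_. 0)"
  then obtain x where "f x \<noteq> 0"
    by auto
  then show "f 1 \<noteq> 0"
    using hom_add_bit0_eq[OF assms, of x] by auto
qed auto

lemma s_map_eq: "s_map = (\<lambda>x. of_int (Rep_bit0 x))"
  unfolding s_map_def
proof (rule the_equality)
  have hom: "hom_add (\<lambda>x::4. of_int (Rep_bit0 x) :: 2)"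
    unfolding hom_add_def by (simp add: Rep_4_add)
  then show "hom_add (\<lambda>x::4. of_int (Rep_bit0 x) :: 2) \<and> (\<lambda>x::4. of_int (Rep_bit0 x) :: 2) \<noteq> (\<lambda>_. 0)"
    using hom_add_bit0_nonzero[OF hom] by (simp add: bit0.Rep_1)
  fix s :: "4 \<Rightarrow> 2"
  assume s: "hom_add s \<and> s \<noteq> (\<lambda>_. 0)"
  then have "s 1 = 1"
    using hom_add_bit0_nonzero nonzero_2_eq_one by blast
  then show "s = (\<lambda>x. of_int (Rep_bit0 x))"
    using s hom by (intro hom_add_bit0_ext) (simp_all add: bit0.Rep_1)
qed

lemma t_map_eq: "t_map = (\<lambda>x. of_int (2 * Rep_bit0 x))"
  unfolding t_map_def
proof (rule the_equality)
  have hom: "hom_add (\<lambda>x::2. of_int (2 * Rep_bit0 x) :: 4)"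
    unfolding hom_add_def by (simp add: Rep_2_add of_int_double_mod_2 distrib_left del: of_int_mult)
  then show "hom_add (\<lambda>x::2. of_int (2 * Rep_bit0 x) :: 4) \<and> (\<lambda>x::2. of_int (2 * Rep_bit0 x) :: 4) \<noteq> (\<lambda>_. 0)"
    using hom_add_bit0_nonzero[OF hom] by (simp add: bit0.Rep_1)
  fix t :: "2 \<Rightarrow> 4"
  assume t: "hom_add t \<and> t \<noteq> (\<lambda>_. 0)"
  have "t 1 + t 1 = t (1 + 1)"
    using t by (simp only: hom_addD)
  also have "(1::2) + 1 = 0"
    by simp
  finally have "t 1 + t 1 = 0"
    using t hom_add_zero by auto
  then have "t 1 = 2"
    using t hom_add_bit0_nonzero two_torsion_4_nonzero_eq_two by blast
  then show "t = (\<lambda>x. of_int (2 * Rep_bit0 x))"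
    using t hom by (intro hom_add_bit0_ext) (simp_all add: bit0.Rep_1)
qed

text \<open>Additive maps into \<open>\<int>/n\<close> in the encoding of \<open>J\<close>: integer valued, with values in \<open>[0, n)\<close>.\<close>

definition mod_hom :: "int \<Rightarrow> ('a::plus \<Rightarrow> int) \<Rightarrow> bool" where
  "mod_hom n f \<longleftrightarrow> (\<forall>x. f x mod n = f x) \<and> (\<forall>x y. f (x + y) = (f x + f y) mod n)"

lemma mod_hom_Rep_bit0:
  "hom_add (g :: 'a::ab_group_add \<Rightarrow> 'n::finite bit0) \<Longrightarrow> mod_hom (int CARD('n bit0)) (\<lambda>x. Rep_bit0 (g x))"
  by (simp add: mod_hom_def bit0.Rep_mod Rep_bit0_add hom_addD del: card_bit0)

lemma hom_add_of_int_mod_hom: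
  "mod_hom (int CARD('n::finite bit0)) f \<Longrightarrow> hom_add (\<lambda>x. of_int (f x) :: 'n bit0)"
  unfolding mod_hom_def hom_add_def by (simp add: of_int_mod_card_bit0 del: card_bit0)

lemma mod_hom_mod: "mod_hom n f \<Longrightarrow> f x mod n = f x"
  by (simp add: mod_hom_def)

lemmas mod_hom_Rep_2 = mod_hom_Rep_bit0 [where 'n=num1, simplified]
lemmas mod_hom_Rep_4 = mod_hom_Rep_bit0 [where 'n="num1 bit0", simplified]
lemmas hom_add_of_int_mod_hom_2 = hom_add_of_int_mod_hom [where 'n=num1, simplified]
lemmas hom_add_of_int_mod_hom_4 = hom_add_of_int_mod_hom [where 'n="num1 bit0", simplified]

lemma mod_hom_half_Rep_4:
  assumes k: "hom_add (k :: 'a::ab_group_add \<Rightarrow> 4)" and torsion: "\<And>x. k x + k x = 0"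
  shows "mod_hom 2 (\<lambda>x. Rep_bit0 (k x) div 2)"
  unfolding mod_hom_def
proof (intro conjI allI)
  fix x y
  have "Rep_bit0 (k (x + y)) = (Rep_bit0 (k x) + Rep_bit0 (k y)) mod 4"
    by (simp add: hom_addD[OF k] Rep_4_add)
  then show "Rep_bit0 (k (x + y)) div 2 = (Rep_bit0 (k x) div 2 + Rep_bit0 (k y) div 2) mod 2"
    using Rep_two_torsion_4_cases[OF torsion[of x]] Rep_two_torsion_4_cases[OF torsion[of y]] by auto
  show "Rep_bit0 (k x) div 2 mod 2 = Rep_bit0 (k x) div 2"
    using Rep_two_torsion_4_cases[OF torsion[of x]] by auto
qed

lemma Rep_4_double_div_2: "Rep_bit0 (w + w :: 4) div 2 = Rep_bit0 w mod 2"
  using Rep_4_add[of w w] Rep_4_bounds[of w] by presburger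

lemmas Delta_defs = DeltaN_def nat_to_rep_def Jhom_def Jnorm_def Jadd_def Jcomp_def

lemma mem_DeltaN_Oa_iff:
  "(ta, tb, tc) \<in> DeltaN eta chi psi Oa \<longleftrightarrow>
     (\<forall>m. ta m = 0) \<and> mod_hom 2 tb \<and> hom_add tc \<and>
     (\<forall>m. tc (eta m) = 0) \<and> (\<forall>m. tb (chi m) = tc m mod 2)"
  by (auto simp: Delta_defs mod_hom_def hom_add_def)

lemma mem_DeltaN_Ob_iff:
  "(ta, tb, tc) \<in> DeltaN eta chi psi Ob \<longleftrightarrow>
     mod_hom 2 ta \<and> mod_hom 4 tb \<and> mod_hom 2 tc \<and>
     (\<forall>m. ta (psi m) = tb m mod 2) \<and> (\<forall>m. tc (eta m) = ta m) \<and>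
     (\<forall>m. tb (chi m) = 2 * tc m mod 4)"
  by (auto simp: Delta_defs mod_hom_def mult.commute)

lemma mem_DeltaN_Oc_iff:
  "(ta, tb, tc) \<in> DeltaN eta chi psi Oc \<longleftrightarrow>
     hom_add ta \<and> mod_hom 2 tb \<and> mod_hom 2 tc \<and>
     (\<forall>m. ta (psi m) = 0) \<and> (\<forall>m. tc (eta m) = ta m mod 2) \<and> (\<forall>m. tb (chi m) = tc m)"
  by (auto simp: Delta_defs mod_hom_def hom_add_def)

definition Delta_a_iso :: "('a \<Rightarrow> int) \<times> ('b \<Rightarrow> int) \<times> ('c \<Rightarrow> int) \<Rightarrow> ('b \<Rightarrow> 2) \<times> ('c \<Rightarrow> int)" where
  "Delta_a_iso = (\<lambda>(ta, tb, tc). (\<lambda>m. of_int (tb m), tc))"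

definition Delta_a_iso_inv :: "('b \<Rightarrow> 2) \<times> ('c \<Rightarrow> int) \<Rightarrow> ('a \<Rightarrow> int) \<times> ('b \<Rightarrow> int) \<times> ('c \<Rightarrow> int)" where
  "Delta_a_iso_inv = (\<lambda>(g, h). (\<lambda>_. 0, \<lambda>m. Rep_bit0 (g m), h))"

lemma bij_betw_Delta_a_iso:
  fixes eta :: "'a::ab_group_add \<Rightarrow> 'c::ab_group_add" and chi :: "'c \<Rightarrow> 'b::ab_group_add"
    and psi :: "'b \<Rightarrow> 'a"
  assumes eta_torsion: "\<And>x. eta x + eta x = 0"
  shows "bij_betw Delta_a_iso (DeltaN eta chi psi Oa) (A' chi)"
proof (rule bij_betw_byWitness[where f' = Delta_a_iso_inv])
  show "\<forall>\<tau>\<in>DeltaN eta chi psi Oa. Delta_a_iso_inv (Delta_a_iso \<tau>) = \<tau>"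
    by (auto simp: mem_DeltaN_Oa_iff Delta_a_iso_def Delta_a_iso_inv_def fun_eq_iff mod_hom_mod)
  show "\<forall>p\<in>A' chi. Delta_a_iso (Delta_a_iso_inv p) = p"
    by (auto simp: A'_def Delta_a_iso_def Delta_a_iso_inv_def)
  show "Delta_a_iso ` DeltaN eta chi psi Oa \<subseteq> A' chi"
    by (auto simp: mem_DeltaN_Oa_iff A'_def Delta_a_iso_def hom_add_of_int_mod_hom_2)
  show "Delta_a_iso_inv ` A' chi \<subseteq> DeltaN eta chi psi Oa"
    by (auto simp: mem_DeltaN_Oa_iff A'_def Delta_a_iso_inv_def mod_hom_Rep_2
        hom_add_int_two_torsion eta_torsion)
qed

definition Delta_b_iso :: "('a \<Rightarrow> int) \<times> ('b \<Rightarrow> int) \<times> ('c \<Rightarrow> int) \<Rightarrow> ('b \<Rightarrow> 4)" where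
  "Delta_b_iso = (\<lambda>(ta, tb, tc). \<lambda>m. of_int (tb m))"

text \<open>The map \<open>g \<circ> \<chi>\<close> lands in the 2-torsion \<open>{0, 2}\<close> of \<open>\<int>/4\<close>, which halving
  identifies with \<open>\<int>/2\<close>; this recovers the components at \<open>c\<close> and \<open>a\<close>.\<close>

definition Delta_b_iso_inv ::
  "('a \<Rightarrow> 'c) \<Rightarrow> ('c \<Rightarrow> 'b) \<Rightarrow> ('b \<Rightarrow> 4) \<Rightarrow> ('a \<Rightarrow> int) \<times> ('b \<Rightarrow> int) \<times> ('c \<Rightarrow> int)" where
  "Delta_b_iso_inv eta chi g =
     (\<lambda>m. Rep_bit0 (g (chi (eta m))) div 2, \<lambda>m. Rep_bit0 (g m), \<lambda>m. Rep_bit0 (g (chi m)) div 2)"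

lemma bij_betw_Delta_b_iso:
  fixes eta :: "'a::ab_group_add \<Rightarrow> 'c::ab_group_add" and chi :: "'c \<Rightarrow> 'b::ab_group_add"
    and psi :: "'b \<Rightarrow> 'a"
  assumes eta: "hom_add eta" and chi: "hom_add chi"
    and chi_torsion: "\<And>z. chi z + chi z = 0"
    and chi_eta_psi: "\<And>y. chi (eta (psi y)) = y + y"
  shows "bij_betw Delta_b_iso (DeltaN eta chi psi Ob) B'"
proof (rule bij_betw_byWitness[where f' = "Delta_b_iso_inv eta chi"])
  show "\<forall>\<tau>\<in>DeltaN eta chi psi Ob. Delta_b_iso_inv eta chi (Delta_b_iso \<tau>) = \<tau>"
  proof (clarify)
    fix ta tb tc
    assume "(ta, tb, tc) \<in> DeltaN eta chi psi Ob"
    then have ta: "mod_hom 2 ta" and tb: "mod_hom 4 tb" and tc: "mod_hom 2 tc"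
      and eta_nat: "\<And>m. tc (eta m) = ta m" and chi_nat: "\<And>m. tb (chi m) = 2 * tc m mod 4"
      by (simp_all add: mem_DeltaN_Ob_iff)
    have "tb (chi z) div 2 = tc z" for z
      using chi_nat[of z] mod_hom_mod[OF tc, of z] by presburger
    then show "Delta_b_iso_inv eta chi (Delta_b_iso (ta, tb, tc)) = (ta, tb, tc)"
      by (simp add: Delta_b_iso_def Delta_b_iso_inv_def fun_eq_iff mod_hom_mod[OF tb] eta_nat)
  qed
  show "\<forall>g\<in>B'. Delta_b_iso (Delta_b_iso_inv eta chi g) = g"
    by (simp add: Delta_b_iso_def Delta_b_iso_inv_def)
  show "Delta_b_iso ` DeltaN eta chi psi Ob \<subseteq> B'"
    by (auto simp: mem_DeltaN_Ob_iff B'_def Delta_b_iso_def hom_add_of_int_mod_hom_4)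
  show "Delta_b_iso_inv eta chi ` B' \<subseteq> DeltaN eta chi psi Ob"
  proof (rule image_subsetI)
    fix g :: "'b \<Rightarrow> 4"
    assume "g \<in> B'"
    then have g: "hom_add g"
      by (simp add: B'_def)
    have g_chi: "hom_add (\<lambda>z. g (chi z))"
      using g chi by (rule hom_add_comp)
    have g_chi_eta: "hom_add (\<lambda>x. g (chi (eta x)))"
      using g_chi eta by (rule hom_add_comp)
    have torsion: "g (chi z) + g (chi z) = 0" for z
      by (simp only: hom_addD[OF g, symmetric] chi_torsion hom_add_zero[OF g])
    have "2 * (Rep_bit0 (g (chi z)) div 2) mod 4 = Rep_bit0 (g (chi z))" for z
      using Rep_two_torsion_4_cases[OF torsion[of z]] by auto
    moreover have "Rep_bit0 (g (chi (eta (psi y)))) div 2 = Rep_bit0 (g y) mod 2" for y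
      by (simp only: chi_eta_psi hom_addD[OF g] Rep_4_double_div_2)
    ultimately show "Delta_b_iso_inv eta chi g \<in> DeltaN eta chi psi Ob"
      using mod_hom_half_Rep_4[OF g_chi torsion] mod_hom_half_Rep_4[OF g_chi_eta torsion]
      by (simp add: mem_DeltaN_Ob_iff Delta_b_iso_inv_def mod_hom_Rep_4[OF g])
  qed
qed

definition Delta_c_iso :: "('a \<Rightarrow> int) \<times> ('b \<Rightarrow> int) \<times> ('c \<Rightarrow> int) \<Rightarrow> ('a \<Rightarrow> int) \<times> ('b \<Rightarrow> 2)" where
  "Delta_c_iso = (\<lambda>(ta, tb, tc). (ta, \<lambda>m. of_int (tb m)))"

definition Delta_c_iso_inv ::
  "('c \<Rightarrow> 'b) \<Rightarrow> ('a \<Rightarrow> int) \<times> ('b \<Rightarrow> 2) \<Rightarrow> ('a \<Rightarrow> int) \<times> ('b \<Rightarrow> int) \<times> ('c \<Rightarrow> int)" where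
  "Delta_c_iso_inv chi = (\<lambda>(f, g). (f, \<lambda>m. Rep_bit0 (g m), \<lambda>m. Rep_bit0 (g (chi m))))"

lemma bij_betw_Delta_c_iso:
  fixes eta :: "'a::ab_group_add \<Rightarrow> 'c::ab_group_add" and chi :: "'c \<Rightarrow> 'b::ab_group_add"
    and psi :: "'b \<Rightarrow> 'a"
  assumes chi: "hom_add chi" and psi_torsion: "\<And>y. psi y + psi y = 0"
  shows "bij_betw Delta_c_iso (DeltaN eta chi psi Oc) (C' eta chi)"
proof (rule bij_betw_byWitness[where f' = "Delta_c_iso_inv chi"])
  show "\<forall>\<tau>\<in>DeltaN eta chi psi Oc. Delta_c_iso_inv chi (Delta_c_iso \<tau>) = \<tau>"
    by (auto simp: mem_DeltaN_Oc_iff Delta_c_iso_def Delta_c_iso_inv_def fun_eq_iff mod_hom_mod)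
  show "\<forall>p\<in>C' eta chi. Delta_c_iso (Delta_c_iso_inv chi p) = p"
    by (auto simp: C'_def Delta_c_iso_def Delta_c_iso_inv_def)
  show "Delta_c_iso ` DeltaN eta chi psi Oc \<subseteq> C' eta chi"
    by (auto simp: mem_DeltaN_Oc_iff C'_def Delta_c_iso_def hom_add_of_int_mod_hom_2)
  show "Delta_c_iso_inv chi ` C' eta chi \<subseteq> DeltaN eta chi psi Oc"
    by (auto simp: mem_DeltaN_Oc_iff C'_def Delta_c_iso_inv_def mod_hom_Rep_2 hom_add_comp chi
        hom_add_int_two_torsion psi_torsion)
qed

lemma Delta_a_iso_nat_add:
  "Delta_a_iso (nat_add Oc \<tau> \<sigma>) =
     (\<lambda>m. fst (Delta_a_iso \<tau>) m + fst (Delta_a_iso \<sigma>) m, \<lambda>m. snd (Delta_a_iso \<tau>) m + snd (Delta_a_iso \<sigma>) m)"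
  by (cases \<tau>; cases \<sigma>) (simp add: Delta_a_iso_def nat_add_def Jadd_def Jnorm_def)

lemma Delta_b_iso_nat_add:
  "Delta_b_iso (nat_add Ob \<tau> \<sigma>) = (\<lambda>m. Delta_b_iso \<tau> m + Delta_b_iso \<sigma> m)"
  by (cases \<tau>; cases \<sigma>) (simp add: Delta_b_iso_def nat_add_def Jadd_def Jnorm_def)

lemma Delta_c_iso_nat_add:
  "Delta_c_iso (nat_add Oa \<tau> \<sigma>) =
     (\<lambda>m. fst (Delta_c_iso \<tau>) m + fst (Delta_c_iso \<sigma>) m, \<lambda>m. snd (Delta_c_iso \<tau>) m + snd (Delta_c_iso \<sigma>) m)"
  by (cases \<tau>; cases \<sigma>) (simp add: Delta_c_iso_def nat_add_def Jadd_def Jnorm_def)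

lemma Delta_a_iso_Delta_psi: "Delta_a_iso (Delta_psi \<tau>) = psi' (Delta_b_iso \<tau>)"
  by (cases \<tau>) (simp add: Delta_a_iso_def Delta_b_iso_def Delta_psi_def psi'_def s_map_eq
      nat_post_def Jcomp_def Jnorm_def o_def)

lemma Delta_c_iso_Delta_eta: "Delta_c_iso (Delta_eta \<tau>) = eta' (Delta_a_iso \<tau>)"
  by (cases \<tau>) (simp add: Delta_c_iso_def Delta_a_iso_def Delta_eta_def eta'_def
      nat_post_def Jcomp_def Jnorm_def)

lemma Delta_b_iso_Delta_chi: "Delta_b_iso (Delta_chi \<tau>) = chi' (Delta_c_iso \<tau>)"
  by (cases \<tau>) (simp add: Delta_b_iso_def Delta_c_iso_def Delta_chi_def chi'_def t_map_eq
      nat_post_def Jcomp_def Jnorm_def o_def of_int_double_mod_2 mult.commute del: of_int_mult)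

lemma ext_eta_diagram_chi_torsion:
  assumes "ext_eta_diagram eta chi psi"
  shows "chi z + chi z = 0"
proof -
  from assms have "hom_add eta" "hom_add chi" "\<And>y. psi (chi y) = 0"
    and chi_eta_psi: "\<And>y. chi (eta (psi y)) = y + y"
    by (simp_all add: ext_eta_diagram_def)
  have "chi z + chi z = chi (eta (psi (chi z)))"
    by (rule chi_eta_psi[symmetric])
  also have "\<dots> = 0"
    by (simp add: \<open>\<And>y. psi (chi y) = 0\<close> hom_add_zero \<open>hom_add eta\<close> \<open>hom_add chi\<close>)
  finally show ?thesis .
qed

lemma ext_eta_diagram_psi_torsion:
  assumes "ext_eta_diagram eta chi psi"
  shows "psi y + psi y = 0"
proof -
  from assms have "hom_add psi" "\<And>y. psi (chi y) = 0"
    and chi_eta_psi: "\<And>y. chi (eta (psi y)) = y + y"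
    by (simp_all add: ext_eta_diagram_def)
  have "psi y + psi y = psi (y + y)"
    by (rule hom_addD[OF \<open>hom_add psi\<close>, symmetric])
  also have "\<dots> = psi (chi (eta (psi y)))"
    by (simp only: chi_eta_psi)
  also have "\<dots> = 0"
    by (rule \<open>\<And>y. psi (chi y) = 0\<close>)
  finally show ?thesis .
qed

theorem proposition7p8:
  fixes eta :: "'a::ab_group_add \<Rightarrow> 'c::ab_group_add"
    and chi :: "'c \<Rightarrow> 'b::ab_group_add"
    and psi :: "'b \<Rightarrow> 'a"
  assumes "ext_eta_diagram eta chi psi"
  shows "\<exists>\<Phi>a \<Phi>b \<Phi>c.
     bij_betw \<Phi>a (DeltaN eta chi psi Oa) (A' chi) \<and>
     bij_betw \<Phi>b (DeltaN eta chi psi Ob) B' \<and>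
     bij_betw \<Phi>c (DeltaN eta chi psi Oc) (C' eta chi) \<and>
     (\<forall>\<tau>\<in>DeltaN eta chi psi Oa. \<forall>\<sigma>\<in>DeltaN eta chi psi Oa.
        \<Phi>a (nat_add (Delta_obj Oa) \<tau> \<sigma>) =
          (\<lambda>m. fst (\<Phi>a \<tau>) m + fst (\<Phi>a \<sigma>) m, \<lambda>m. snd (\<Phi>a \<tau>) m + snd (\<Phi>a \<sigma>) m)) \<and>
     (\<forall>\<tau>\<in>DeltaN eta chi psi Ob. \<forall>\<sigma>\<in>DeltaN eta chi psi Ob.
        \<Phi>b (nat_add (Delta_obj Ob) \<tau> \<sigma>) = (\<lambda>m. \<Phi>b \<tau> m + \<Phi>b \<sigma> m)) \<and>
     (\<forall>\<tau>\<in>DeltaN eta chi psi Oc. \<forall>\<sigma>\<in>DeltaN eta chi psi Oc.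
        \<Phi>c (nat_add (Delta_obj Oc) \<tau> \<sigma>) =
          (\<lambda>m. fst (\<Phi>c \<tau>) m + fst (\<Phi>c \<sigma>) m, \<lambda>m. snd (\<Phi>c \<tau>) m + snd (\<Phi>c \<sigma>) m)) \<and>
     (\<forall>\<tau>\<in>DeltaN eta chi psi Ob. \<Phi>a (Delta_psi \<tau>) = psi' (\<Phi>b \<tau>)) \<and>
     (\<forall>\<tau>\<in>DeltaN eta chi psi Oa. \<Phi>c (Delta_eta \<tau>) = eta' (\<Phi>a \<tau>)) \<and>
     (\<forall>\<tau>\<in>DeltaN eta chi psi Oc. \<Phi>b (Delta_chi \<tau>) = chi' (\<Phi>c \<tau>))"
proof (intro exI conjI ballI)
  from assms have eta: "hom_add eta" and chi: "hom_add chi"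
    and eta_torsion: "\<And>x. eta x + eta x = 0" and chi_eta_psi: "\<And>y. chi (eta (psi y)) = y + y"
    by (simp_all add: ext_eta_diagram_def)
  show "bij_betw Delta_a_iso (DeltaN eta chi psi Oa) (A' chi)"
    using eta_torsion by (rule bij_betw_Delta_a_iso)
  show "bij_betw Delta_b_iso (DeltaN eta chi psi Ob) B'"
    using eta chi ext_eta_diagram_chi_torsion[OF assms] chi_eta_psi by (rule bij_betw_Delta_b_iso)
  show "bij_betw Delta_c_iso (DeltaN eta chi psi Oc) (C' eta chi)"
    using chi ext_eta_diagram_psi_torsion[OF assms] by (rule bij_betw_Delta_c_iso)
qed (simp_all add: Delta_a_iso_nat_add Delta_b_iso_nat_add Delta_c_iso_nat_add
       Delta_a_iso_Delta_psi Delta_c_iso_Delta_eta Delta_b_iso_Delta_chi)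

end
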